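(* Fix a bounded subset $E\subset\mathbb C$. There exists $\ell=\ell(E)\ge1$ such that for all sufficiently small $\epsilon>0$, $$a_tkmn_z\in H_{\ell\epsilon}\,m\,a_t\,n_z\,U_{\ell\epsilon}$$ holds for any $m\in M$, $t>0$, $z\in E$ and $k\in K_\epsilon$.
   Context: $G=\mathrm{PSL}_2(\mathbb C)$, $K=\mathrm{PSU}(2)$, $a_t=\mathrm{diag}(e^{t/2},e^{-t/2})$, $M=\{\mathrm{diag}(e^{i\theta},e^{-i\theta})\}$, $n_z=\begin{pmatrix}1&z\\0&1\end{pmatrix}$, $H$ the stabilizer in $G$ of the unit circle centered at $0$. With a fixed left-invariant metric on $G$, $U_\epsilon$ is the $\epsilon$-ball around $e$, and for $W\subset G$, $W_\epsilon=W\cap U_\epsilon$ (so $K_\epsilon=K\cap U_\epsilon$, $H_{\ell\epsilon}=H\cap U_{\ell\epsilon}$). *)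

theory Defs
  imports "HOL-Analysis.Analysis"
begin

text \<open>G = PSL_2(C) is modelled through its double cover SL_2(C): elements of G are
  represented by matrices of determinant 1, and two representatives A, B denote the same
  element of G iff A = B or A = -B. All subsets of G below are pulled back to sign-closed
  subsets of SL_2(C).\<close>

type_synonym cmat = "complex^2^2"

definition mat2 :: "complex \<Rightarrow> complex \<Rightarrow> complex \<Rightarrow> complex \<Rightarrow> cmat" where
  "mat2 a b c d = (\<chi> i j. if i = 1 then (if j = 1 then a else b) else (if j = 1 then c else d))"

definition SL2 :: "cmat set" where
  "SL2 = {A. det A = 1}"

definition psl_eq :: "cmat \<Rightarrow> cmat \<Rightarrow> bool" where
  "psl_eq A B \<longleftrightarrow> A = B \<or> A = - B"

text \<open>Reference size of g near the identity: min over the two lifts of the Frobenius distance to I.\<close>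
definition rho :: "cmat \<Rightarrow> real" where
  "rho A = min (norm (A - mat 1)) (norm (A + mat 1))"

text \<open>A left-invariant metric on PSL_2(C) (as a function on representatives) which near the
  identity is bi-Lipschitz comparable to the standard (matrix) distance -- this holds for every
  left-invariant Riemannian metric.\<close>
definition psl_left_inv_metric :: "(cmat \<Rightarrow> cmat \<Rightarrow> real) \<Rightarrow> bool" where
  "psl_left_inv_metric d \<longleftrightarrow>
     (\<forall>A\<in>SL2. \<forall>B\<in>SL2. d A B \<ge> 0 \<and> (d A B = 0 \<longleftrightarrow> psl_eq A B) \<and> d A B = d B A
        \<and> d (- A) B = d A B \<and> d A (- B) = d A B) \<and>
     (\<forall>A\<in>SL2. \<forall>B\<in>SL2. \<forall>C\<in>SL2. d A C \<le> d A B + d B C) \<and>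
     (\<forall>A\<in>SL2. \<forall>B\<in>SL2. \<forall>C\<in>SL2. d (C ** A) (C ** B) = d A B) \<and>
     (\<exists>c>0. \<exists>\<delta>>0. \<forall>A\<in>SL2. min (rho A) (d (mat 1) A) < \<delta> \<longrightarrow>
         c * rho A \<le> d (mat 1) A \<and> d (mat 1) A \<le> rho A / c)"

definition Uball :: "(cmat \<Rightarrow> cmat \<Rightarrow> real) \<Rightarrow> real \<Rightarrow> cmat set" where
  "Uball d r = {A\<in>SL2. d (mat 1) A < r}"

definition adj :: "cmat \<Rightarrow> cmat" where
  "adj A = (\<chi> i j. cnj (A $ j $ i))"

definition Kgrp :: "cmat set" where
  "Kgrp = {A\<in>SL2. A ** adj A = mat 1}"

definition mob :: "cmat \<Rightarrow> complex \<Rightarrow> complex" where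
  "mob A w = (A$1$1 * w + A$1$2) / (A$2$1 * w + A$2$2)"

text \<open>H = stabilizer (setwise) of the unit circle centred at 0, acting on the Riemann sphere:
  g maps the circle into itself (never to infinity) and onto itself.\<close>
definition Hgrp :: "cmat set" where
  "Hgrp = {A\<in>SL2.
     (\<forall>w. norm w = 1 \<longrightarrow> A$2$1 * w + A$2$2 \<noteq> 0 \<and> norm (mob A w) = 1) \<and>
     (\<forall>u. norm u = 1 \<longrightarrow> (\<exists>w. norm w = 1 \<and> mob A w = u))}"

definition a_t :: "real \<Rightarrow> cmat" where
  "a_t t = mat2 (of_real (exp (t/2))) 0 0 (of_real (exp (-t/2)))"

definition m_th :: "real \<Rightarrow> cmat" where
  "m_th \<theta> = mat2 (cis \<theta>) 0 0 (cis (-\<theta>))"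

definition n_z :: "complex \<Rightarrow> cmat" where
  "n_z z = mat2 1 z 0 1"

end

theory Submission imports Defs begin

text \<open>Since \<open>a\<^sub>t\<close> commutes with \<open>m\<close>, one has
  \<open>a\<^sub>t k m n\<^sub>z = m a\<^sub>t n\<^sub>z \<cdot> (m n\<^sub>z)\<inverse> k (m n\<^sub>z)\<close>, so already \<open>h = e\<close> works with
  \<open>u = (m n\<^sub>z)\<inverse> k (m n\<^sub>z)\<close>, independently of \<open>t\<close>. As \<open>z\<close> ranges over the bounded set \<open>E\<close>,
  the conjugating matrices \<open>m n\<^sub>z\<close> have uniformly bounded entries, so conjugation by them
  moves a neighbourhood of the identity by at most a fixed factor in the matrix distance,
  and hence, by the local comparability of \<open>d\<close> with that distance, also in \<open>d\<close>.\<close>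

lemma norm_matrix_le_sum_entries:
  fixes A :: "'a::real_normed_vector^'n^'m"
  shows "norm A \<le> (\<Sum>i\<in>UNIV. \<Sum>j\<in>UNIV. norm (A$i$j))"
proof -
  have "norm A \<le> (\<Sum>i\<in>UNIV. norm (A$i))"
    unfolding norm_vec_def by (rule L2_set_le_sum) simp
  also have "\<dots> \<le> (\<Sum>i\<in>UNIV. \<Sum>j\<in>UNIV. norm (A$i$j))"
    unfolding norm_vec_def by (intro sum_mono L2_set_le_sum) simp
  finally show ?thesis .
qed

lemma norm_matrix_entry_le:
  fixes A :: "'a::real_normed_vector^'n^'m"
  shows "norm (A$i$j) \<le> norm A"
  using Finite_Cartesian_Product.norm_nth_le[of "A$i" j]
    Finite_Cartesian_Product.norm_nth_le[of A i] by linarith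

lemma norm_matrix_mult_entry_le:
  fixes A :: "'a::real_normed_div_algebra^'n^'m" and B :: "'a^'p^'n" and a b :: real
  assumes "\<And>i j. norm (A$i$j) \<le> a" and "\<And>j k. norm (B$j$k) \<le> b"
  shows "norm ((A ** B)$i$k) \<le> CARD('n) * (a * b)"
proof -
  have "norm ((A ** B)$i$k) \<le> (\<Sum>j\<in>UNIV. norm (A$i$j) * norm (B$j$k))"
    unfolding matrix_matrix_mult_def by (simp add: norm_mult[symmetric] norm_sum)
  also have "\<dots> \<le> (\<Sum>j\<in>(UNIV::'n set). a * b)"
    using assms by (intro sum_mono mult_mono') auto
  finally show ?thesis by simp
qed

lemma norm_matrix_conj_le:
  fixes P Q X :: "'a::real_normed_div_algebra^'n^'n" and b :: real
  assumes P: "\<And>i j. norm (P$i$j) \<le> b" and Q: "\<And>i j. norm (Q$i$j) \<le> b"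
  shows "norm (P ** X ** Q) \<le> CARD('n)^4 * b^2 * norm X"
proof -
  have PX: "norm ((P ** X)$i$k) \<le> CARD('n) * (b * norm X)" for i k
    by (rule norm_matrix_mult_entry_le[OF P norm_matrix_entry_le])
  have "norm ((P ** X ** Q)$i$l) \<le> CARD('n) * (CARD('n) * (b * norm X) * b)" for i l
    by (rule norm_matrix_mult_entry_le[OF PX Q])
  then have "norm (P ** X ** Q) \<le> (\<Sum>i\<in>(UNIV::'n set). \<Sum>j\<in>(UNIV::'n set).
               CARD('n) * (CARD('n) * (b * norm X) * b))"
    by (intro order_trans[OF norm_matrix_le_sum_entries] sum_mono)
  also have "\<dots> = CARD('n)^4 * b^2 * norm X"
    by (simp add: power2_eq_square power4_eq_xxxx)
  finally show ?thesis .
qed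

lemma matrix_add_rdistrib:
  fixes A B C :: "'a::semiring_1^'n^'n"
  shows "(B + C) ** A = B ** A + C ** A"
  by (simp add: vec_eq_iff matrix_matrix_mult_def sum.distrib ring_distribs)

lemma matrix_diff_ldistrib:
  fixes A B C :: "'a::ring_1^'n^'n"
  shows "A ** (B - C) = A ** B - A ** C"
  by (simp add: vec_eq_iff matrix_matrix_mult_def sum_subtractf ring_distribs)

lemma matrix_diff_rdistrib:
  fixes A B C :: "'a::ring_1^'n^'n"
  shows "(B - C) ** A = B ** A - C ** A"
  by (simp add: vec_eq_iff matrix_matrix_mult_def sum_subtractf ring_distribs)

lemma rho_conj_le:
  fixes P Q k :: cmat and b :: real
  assumes QP: "Q ** P = mat 1"
    and P: "\<And>i j. norm (P$i$j) \<le> b" and Q: "\<And>i j. norm (Q$i$j) \<le> b"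
  shows "rho (Q ** k ** P) \<le> 16 * b^2 * rho k"
proof -
  have "Q ** k ** P - mat 1 = Q ** (k - mat 1) ** P"
    by (simp add: matrix_diff_ldistrib matrix_diff_rdistrib QP matrix_mul_assoc)
  moreover have "Q ** k ** P + mat 1 = Q ** (k + mat 1) ** P"
    by (simp add: matrix_add_ldistrib matrix_add_rdistrib QP matrix_mul_assoc)
  ultimately have "norm (Q ** k ** P - mat 1) \<le> 16 * b^2 * norm (k - mat 1)"
                  "norm (Q ** k ** P + mat 1) \<le> 16 * b^2 * norm (k + mat 1)"
    using norm_matrix_conj_le[OF Q P] by auto
  then show ?thesis unfolding rho_def min_def by auto
qed

lemma det_conj:
  fixes P Q k :: "'a::comm_ring_1^'n^'n"
  assumes "Q ** P = mat 1"
  shows "det (Q ** k ** P) = det k"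
proof -
  have "det Q * det P = 1" using arg_cong[OF assms, of det] by (simp add: det_mul)
  then show ?thesis by (simp add: det_mul) (metis mult.commute mult.left_commute mult_1_right)
qed

lemma psl_metric_le_of_rho_le:
  assumes "psl_left_inv_metric d" and "0 \<le> C"
  shows "\<exists>L\<ge>1. \<exists>\<epsilon>0>0. \<forall>k\<in>SL2. \<forall>u\<in>SL2. rho u \<le> C * rho k \<and> d (mat 1) k < \<epsilon>0 \<longrightarrow>
           d (mat 1) u \<le> L * d (mat 1) k"
proof -
  from assms(1) obtain c \<delta> where c: "c > 0" and \<delta>: "\<delta> > 0"
    and cmp: "\<And>A. A \<in> SL2 \<Longrightarrow> min (rho A) (d (mat 1) A) < \<delta> \<Longrightarrow>
                  c * rho A \<le> d (mat 1) A \<and> d (mat 1) A \<le> rho A / c"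
    and nonneg: "\<And>A B. A \<in> SL2 \<Longrightarrow> B \<in> SL2 \<Longrightarrow> d A B \<ge> 0"
    unfolding psl_left_inv_metric_def by metis
  define C' where "C' = max 1 C"
  define L where "L = max 1 (C / c^2)"
  define \<epsilon>0 where "\<epsilon>0 = min \<delta> (\<delta> * c / C')"
  have C': "C \<le> C'" "1 \<le> C'" unfolding C'_def by auto
  have "d (mat 1) u \<le> L * d (mat 1) k"
    if k: "k \<in> SL2" and u: "u \<in> SL2" and conj: "rho u \<le> C * rho k"
      and dk: "d (mat 1) k < \<epsilon>0" for k u
  proof -
    have dk0: "0 \<le> d (mat 1) k" using nonneg k by (simp add: SL2_def)
    have "c * rho k \<le> d (mat 1) k"
      using cmp[OF k] dk unfolding \<epsilon>0_def by linarith
    then have rk: "rho k \<le> d (mat 1) k / c" using c by (simp add: field_simps)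
    have ru: "rho u \<le> C * (d (mat 1) k / c)"
      using conj mult_left_mono[OF rk assms(2)] by linarith
    also have "\<dots> \<le> C' * (d (mat 1) k / c)"
      using C' dk0 c by (intro mult_right_mono) auto
    also have "\<dots> < C' * (\<epsilon>0 / c)"
      using dk c C' by (simp add: divide_strict_right_mono)
    also have "\<dots> \<le> C' * (\<delta> * c / C' / c)"
      using c C' unfolding \<epsilon>0_def by (intro mult_left_mono divide_right_mono) auto
    also have "\<dots> = \<delta>" using c C' by simp
    finally have "d (mat 1) u \<le> rho u / c" using cmp[OF u] by simp
    also have "\<dots> \<le> C * (d (mat 1) k / c) / c" using ru c by (intro divide_right_mono) auto
    also have "\<dots> = (C / c^2) * d (mat 1) k" by (simp add: power2_eq_square)
    also have "\<dots> \<le> L * d (mat 1) k" unfolding L_def using dk0 by (intro mult_right_mono) auto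
    finally show ?thesis .
  qed
  moreover have "\<epsilon>0 > 0" unfolding \<epsilon>0_def using \<delta> c C' by simp
  ultimately show ?thesis unfolding L_def by (meson max.cobounded1)
qed

lemma mat_one_in_Uball:
  assumes "psl_left_inv_metric d" and "0 < r"
  shows "mat 1 \<in> Uball d r"
proof -
  have I: "mat 1 \<in> SL2" by (simp add: SL2_def)
  with assms(1) have "d (mat 1) (mat 1) = 0"
    unfolding psl_left_inv_metric_def psl_eq_def by blast
  with I assms(2) show ?thesis by (simp add: Uball_def)
qed

lemma mat2_mult:
  "mat2 a b c d ** mat2 a' b' c' d' =
   mat2 (a*a' + b*c') (a*b' + b*d') (c*a' + d*c') (c*b' + d*d')"
  by (simp add: vec_eq_iff forall_2 matrix_matrix_mult_def mat2_def sum_2)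

lemma mat_one_eq_mat2: "(mat 1 :: cmat) = mat2 1 0 0 1"
  by (simp add: vec_eq_iff forall_2 mat_def mat2_def)

lemma norm_mat2_entry_le:
  "norm a \<le> r \<Longrightarrow> norm b \<le> r \<Longrightarrow> norm c \<le> r \<Longrightarrow> norm e \<le> r \<Longrightarrow>
   norm ((mat2 a b c e)$i$j) \<le> r"
  using exhaust_2[of i] exhaust_2[of j] by (auto simp: mat2_def)

lemma m_th_inverse: "m_th (-\<theta>) ** m_th \<theta> = mat 1" "m_th \<theta> ** m_th (-\<theta>) = mat 1"
  by (simp_all add: m_th_def mat2_mult mat_one_eq_mat2 cis_mult)

lemma n_z_inverse: "n_z (-z) ** n_z z = mat 1" "n_z z ** n_z (-z) = mat 1"
  by (simp_all add: n_z_def mat2_mult mat_one_eq_mat2)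

lemma m_th_a_t_commute: "m_th \<theta> ** a_t t = a_t t ** m_th \<theta>"
  by (simp add: m_th_def a_t_def mat2_mult mult.commute)

lemma a_t_mult_eq_conj:
  "a_t t ** k ** m_th \<theta> ** n_z z =
   m_th \<theta> ** a_t t ** n_z z ** (n_z (-z) ** m_th (-\<theta>) ** k ** (m_th \<theta> ** n_z z))"
proof -
  have n: "X ** n_z z ** n_z (-z) = X" for X
    by (simp add: matrix_mul_assoc[symmetric] n_z_inverse)
  have m: "X ** m_th \<theta> ** m_th (-\<theta>) = X" for X
    by (simp add: matrix_mul_assoc[symmetric] m_th_inverse)
  show ?thesis by (simp add: matrix_mul_assoc m_th_a_t_commute n m)
qed

lemma norm_m_th_n_z_entries_le:
  assumes "norm z \<le> B" and "0 \<le> B"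
  shows "norm ((m_th \<theta> ** n_z z)$i$j) \<le> 1 + B"
    and "norm ((n_z (-z) ** m_th (-\<theta>))$i$j) \<le> 1 + B"
  using assms by (auto simp: m_th_def n_z_def mat2_mult norm_mult intro!: norm_mat2_entry_le)

lemma m_th_n_z_conj:
  fixes \<theta> :: real
  assumes "norm z \<le> B" and "0 \<le> B" and "k \<in> SL2"
  defines "u \<equiv> n_z (-z) ** m_th (-\<theta>) ** k ** (m_th \<theta> ** n_z z)"
  shows "u \<in> SL2" and "rho u \<le> 16 * (1 + B)^2 * rho k"
proof -
  have inverse: "n_z (-z) ** m_th (-\<theta>) ** (m_th \<theta> ** n_z z) = mat 1"
    by (simp add: matrix_mul_assoc[symmetric]) (simp add: matrix_mul_assoc m_th_inverse n_z_inverse)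
  show "u \<in> SL2" using assms(3) det_conj[OF inverse] by (simp add: u_def SL2_def)
  show "rho u \<le> 16 * (1 + B)^2 * rho k"
    unfolding u_def using norm_m_th_n_z_entries_le[OF assms(1,2)]
    by (intro rho_conj_le[OF inverse]) auto
qed

lemma mat_one_in_Hgrp: "mat 1 \<in> Hgrp"
  by (simp add: Hgrp_def SL2_def mob_def mat_def det_I[unfolded mat_def])

theorem proposition4p4:
  fixes d :: "cmat \<Rightarrow> cmat \<Rightarrow> real" and E :: "complex set"
  assumes "psl_left_inv_metric d" and "bounded E"
  shows "\<exists>l::real\<ge>1. \<exists>\<epsilon>0>0. \<forall>\<epsilon>. 0 < \<epsilon> \<and> \<epsilon> < \<epsilon>0 \<longrightarrow>
           (\<forall>\<theta>::real. \<forall>t::real. \<forall>z\<in>E. \<forall>k\<in>Kgrp \<inter> Uball d \<epsilon>. t > 0 \<longrightarrow>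
              (\<exists>h\<in>Hgrp \<inter> Uball d (l * \<epsilon>). \<exists>u\<in>Uball d (l * \<epsilon>).
                 psl_eq (a_t t ** k ** m_th \<theta> ** n_z z) (h ** m_th \<theta> ** a_t t ** n_z z ** u)))"
proof -
  obtain B where B: "0 \<le> B" "\<And>z. z \<in> E \<Longrightarrow> norm z \<le> B"
    using assms(2) unfolding bounded_iff by (meson norm_ge_zero order_trans)
  obtain l \<epsilon>0 where l: "l \<ge> 1" and \<epsilon>0: "\<epsilon>0 > 0"
    and dominated: "\<And>k u. k \<in> SL2 \<Longrightarrow> u \<in> SL2 \<Longrightarrow> rho u \<le> 16 * (1 + B)^2 * rho k \<Longrightarrow>
                      d (mat 1) k < \<epsilon>0 \<Longrightarrow> d (mat 1) u \<le> l * d (mat 1) k"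
    using psl_metric_le_of_rho_le[OF assms(1), of "16 * (1 + B)^2"] by auto
  have "\<exists>h\<in>Hgrp \<inter> Uball d (l * \<epsilon>). \<exists>u\<in>Uball d (l * \<epsilon>).
          psl_eq (a_t t ** k ** m_th \<theta> ** n_z z) (h ** m_th \<theta> ** a_t t ** n_z z ** u)"
    if \<epsilon>: "0 < \<epsilon>" "\<epsilon> < \<epsilon>0" and z: "z \<in> E" and k: "k \<in> Kgrp \<inter> Uball d \<epsilon>"
    for \<epsilon> \<theta> t z k
  proof -
    define u where "u = n_z (-z) ** m_th (-\<theta>) ** k ** (m_th \<theta> ** n_z z)"
    have kS: "k \<in> SL2" and dk: "d (mat 1) k < \<epsilon>" using k by (auto simp: Uball_def Kgrp_def)
    have uS: "u \<in> SL2" and ru: "rho u \<le> 16 * (1 + B)^2 * rho k"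
      using m_th_n_z_conj[OF B(2)[OF z] B(1) kS] unfolding u_def by blast+
    have "d (mat 1) u \<le> l * d (mat 1) k" using dominated[OF kS uS ru] dk \<epsilon> by simp
    also have "\<dots> < l * \<epsilon>" using dk l by simp
    finally have "u \<in> Uball d (l * \<epsilon>)" using uS by (simp add: Uball_def)
    moreover have "mat 1 \<in> Hgrp \<inter> Uball d (l * \<epsilon>)"
      using mat_one_in_Hgrp mat_one_in_Uball[OF assms(1)] l \<epsilon> by simp
    moreover have "psl_eq (a_t t ** k ** m_th \<theta> ** n_z z) (mat 1 ** m_th \<theta> ** a_t t ** n_z z ** u)"
      using a_t_mult_eq_conj by (simp add: psl_eq_def u_def)
    ultimately show ?thesis by blast
  qed
  with l \<epsilon>0 show ?thesis by blast
qed

end
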